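(* Let $\varphi$ be a skew-morphism of a finite group $A$ and let $\bar\varphi$ be the induced skew-morphism of $\bar A=A/\mathrm{Core}\,\varphi$. Then $\mathrm{Smooth}\,\varphi$ is a $\varphi$-invariant subgroup of $A$ and $\mathrm{Fix}\,\bar\varphi=\mathrm{Smooth}\,\varphi/\mathrm{Core}\,\varphi$. In particular: (i) $\mathrm{Smooth}\,\varphi=\mathrm{Core}\,\varphi$ if and only if $\mathrm{Fix}\,\bar\varphi$ is the trivial subgroup of $\bar A$; (ii) $\mathrm{Smooth}\,\varphi=A$ if and only if $\mathrm{Fix}\,\bar\varphi=\bar A$; (iii) if $\mathrm{Core}\,\varphi=1$ then $\mathrm{Smooth}\,\varphi=\mathrm{Fix}\,\varphi$.
   Context: A skew-morphism of a finite group $A$ is a permutation $\varphi$ of the set $A$ with $\varphi(1)=1$ for which there exists a function $\pi:A\to\mathbb{Z}_n$, where $n$ is the order of $\varphi$ as a permutation, such that $\varphi(xy)=\varphi(x)\varphi^{\pi(x)}(y)$ for all $x,y\in A$; $\pi$ is the power function. The kernel is $\mathrm{Ker}\,\varphi=\{x\in A:\pi(x)=1\}$, and the core is $\mathrm{Core}\,\varphi=\bigcap_{i=1}^n\varphi^i(\mathrm{Ker}\,\varphi)$, a $\varphi$-invariant normal subgroup of $A$ contained in $\mathrm{Ker}\,\varphi$. For a $\varphi$-invariant normal subgroup $N$, the induced skew-morphism $\bar\varphi$ of $A/N$ is $\bar\varphi(xN)=\varphi(x)N$. A subset $N$ is $\varphi$-invariant if $\varphi(N)=N$. $\mathrm{Fix}\,\psi$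 is the set of fixed points of $\psi$. $\mathrm{Smooth}\,\varphi=\{x\in A:\varphi(x)\in x\,\mathrm{Core}\,\varphi\}$. *)

theory Defs
  imports "HOL-Algebra.Algebra"
begin

definition perm_order :: "('a, 'b) monoid_scheme \<Rightarrow> ('a \<Rightarrow> 'a) \<Rightarrow> nat" where
  "perm_order G phi = (LEAST n. 0 < n \<and> (\<forall>x\<in>carrier G. (phi ^^ n) x = x))"

text \<open>phi is a skew-morphism of G with power function pw; the values of pw are
  represented by the residues 0..n-1 of Z_n, n the order of phi.\<close>
definition skew_morphism :: "('a, 'b) monoid_scheme \<Rightarrow> ('a \<Rightarrow> 'a) \<Rightarrow> ('a \<Rightarrow> nat) \<Rightarrow> bool" where
  "skew_morphism G phi pw \<longleftrightarrow>
     bij_betw phi (carrier G) (carrier G) \<and> phi \<one>\<^bsub>G\<^esub> = \<one>\<^bsub>G\<^esub> \<and>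
     (\<forall>x\<in>carrier G. pw x < perm_order G phi) \<and>
     (\<forall>x\<in>carrier G. \<forall>y\<in>carrier G.
        phi (x \<otimes>\<^bsub>G\<^esub> y) = phi x \<otimes>\<^bsub>G\<^esub> (phi ^^ pw x) y)"

definition skew_kernel :: "('a, 'b) monoid_scheme \<Rightarrow> ('a \<Rightarrow> 'a) \<Rightarrow> ('a \<Rightarrow> nat) \<Rightarrow> 'a set" where
  "skew_kernel G phi pw = {x \<in> carrier G. pw x mod perm_order G phi = 1 mod perm_order G phi}"

definition skew_core :: "('a, 'b) monoid_scheme \<Rightarrow> ('a \<Rightarrow> 'a) \<Rightarrow> ('a \<Rightarrow> nat) \<Rightarrow> 'a set" where
  "skew_core G phi pw = (\<Inter>i\<in>{1..perm_order G phi}. (phi ^^ i) ` skew_kernel G phi pw)"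

definition skew_smooth :: "('a, 'b) monoid_scheme \<Rightarrow> ('a \<Rightarrow> 'a) \<Rightarrow> ('a \<Rightarrow> nat) \<Rightarrow> 'a set" where
  "skew_smooth G phi pw = {x \<in> carrier G. phi x \<in> x <#\<^bsub>G\<^esub> skew_core G phi pw}"

text \<open>Induced map on A/N: xN \<mapsto> phi(x)N (N normal, cosets N #> x = x <# N).\<close>
definition induced_skew :: "('a, 'b) monoid_scheme \<Rightarrow> 'a set \<Rightarrow> ('a \<Rightarrow> 'a) \<Rightarrow> 'a set \<Rightarrow> 'a set" where
  "induced_skew G N phi C = N #>\<^bsub>G\<^esub> phi (SOME x. x \<in> C)"

definition fixset :: "'c set \<Rightarrow> ('c \<Rightarrow> 'c) \<Rightarrow> 'c set" where
  "fixset S f = {x \<in> S. f x = x}"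

end

theory Submission
  imports Defs
begin

text \<open>Let \<open>K\<close> be the core. Since \<open>\<phi>\<close> acts as a group automorphism along \<open>K\<close>, i.e.
  \<open>\<phi>\<^sup>j(k y) = \<phi>\<^sup>j(k) \<phi>\<^sup>j(y)\<close> for \<open>k \<in> K\<close>, the map \<open>\<phi>\<close> permutes the cosets of \<open>K\<close>:
  \<open>\<phi>(k x) K = \<phi>(x) K\<close>. Hence \<open>\<bar>\<phi>\<close> is well defined, and \<open>x\<close> is smooth exactly when
  \<open>xK\<close> is a fixed point of \<open>\<bar>\<phi>\<close>, which gives \<open>Fix \<bar>\<phi> = Smooth \<phi> / K\<close>. The skew product
  rule \<open>\<phi>(xy)K = \<phi>(x)K \<cdot> \<phi>\<^sup>\<pi>\<^sup>(\<^sup>x\<^sup>)(y)K\<close> in \<open>A/K\<close> shows that smooth elements are closed under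
  multiplication, and finiteness supplies inverses. The remaining claims are general facts
  about subgroups between \<open>K\<close> and \<open>A\<close>.\<close>

lemma sum_mod_cong:
  "(\<And>i. i \<in> A \<Longrightarrow> f i mod m = g i mod m) \<Longrightarrow> sum f A mod (m::nat) = sum g A mod m"
  by (metis (no_types, lifting) mod_sum_eq sum.cong)

lemma (in group) finite_closed_subgroup:
  assumes "finite H" "H \<subseteq> carrier G" "\<one> \<in> H" "\<And>x y. x \<in> H \<Longrightarrow> y \<in> H \<Longrightarrow> x \<otimes> y \<in> H"
  shows "subgroup H G"
proof
  fix x assume x: "x \<in> H"
  have xc: "x \<in> carrier G" using x assms(2) by blast
  have "(\<lambda>y. x \<otimes> y) ` H = H"
  proof (rule endo_inj_surj)
    show "(\<lambda>y. x \<otimes> y) ` H \<subseteq> H" using assms(4) x by blast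
    show "inj_on (\<lambda>y. x \<otimes> y) H"
      using xc assms(2) by (auto intro: inj_onI simp: l_cancel subset_iff)
  qed (rule assms(1))
  then obtain y where y: "y \<in> H" "x \<otimes> y = \<one>" using assms(3) by (metis imageE)
  then have "inv x = y" using xc assms(2) by (metis inv_comm inv_equality subsetD)
  then show "inv x \<in> H" using y by simp
qed (use assms in auto)

lemma (in group) rcosets_eq_singleton_iff:
  assumes "subgroup K G" "K \<subseteq> S" "S \<subseteq> carrier G"
  shows "(\<lambda>x. K #> x) ` S = {K} \<longleftrightarrow> S = K"
proof
  assume image: "(\<lambda>x. K #> x) ` S = {K}"
  have "x \<in> K" if "x \<in> S" for x
  proof (rule coset_join1)
    have "K #> x \<in> (\<lambda>x. K #> x) ` S" using that by (rule imageI)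
    then show "K #> x = K" using image by simp
  qed (use that assms in auto)
  then show "S = K" using assms(2) by blast
next
  assume "S = K"
  moreover have "K #> x = K" if "x \<in> K" for x
    using that assms(1) by (simp add: coset_join2 subgroup.mem_carrier)
  moreover have "\<one> \<in> K" using assms(1) by (rule subgroup.one_closed)
  ultimately show "(\<lambda>x. K #> x) ` S = {K}" by blast
qed

lemma (in group) rcosets_eq_carrier_iff:
  assumes "subgroup S G" "subgroup K G" "K \<subseteq> S"
  shows "(\<lambda>x. K #> x) ` S = (\<lambda>x. K #> x) ` carrier G \<longleftrightarrow> S = carrier G"
proof
  assume image: "(\<lambda>x. K #> x) ` S = (\<lambda>x. K #> x) ` carrier G"
  have "g \<in> S" if g: "g \<in> carrier G" for g
  proof -
    have "K #> g \<in> (\<lambda>x. K #> x) ` S" using image g by simp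
    then obtain s where s: "s \<in> S" "K #> g = K #> s" by blast
    have "g \<in> K #> s" by (rule repr_independenceD[OF assms(2) g s(2)[symmetric]])
    then obtain k where "k \<in> K" "g = k \<otimes> s" unfolding r_coset_def by blast
    then show "g \<in> S" using subgroup.m_closed[OF assms(1) _ s(1)] assms(3) by blast
  qed
  then show "S = carrier G" using subgroup.subset[OF assms(1)] by blast
qed simp

locale finite_carrier_perm =
  fixes G :: "('a, 'b) monoid_scheme" and phi :: "'a \<Rightarrow> 'a"
  assumes finite_carrier: "finite (carrier G)"
    and bij_phi: "bij_betw phi (carrier G) (carrier G)"
begin

abbreviation n where "n \<equiv> perm_order G phi"

lemma funpow_closed [simp]: "x \<in> carrier G \<Longrightarrow> (phi ^^ k) x \<in> carrier G"
  using bij_betw_funpow[OF bij_phi] bij_betwE by blast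

lemma phi_closed [simp]: "x \<in> carrier G \<Longrightarrow> phi x \<in> carrier G"
  using funpow_closed[of x 1] by simp

lemma inj_on_funpow: "inj_on (phi ^^ k) (carrier G)"
  using bij_betw_funpow[OF bij_phi] bij_betw_def by blast

lemma image_phi_eq: "A \<subseteq> carrier G \<Longrightarrow> phi ` A \<subseteq> A \<Longrightarrow> phi ` A = A"
  using endo_inj_surj finite_subset[OF _ finite_carrier]
    inj_on_subset[OF bij_betw_imp_inj_on[OF bij_phi]] by metis

lemma funpow_diff_id:
  assumes "a \<le> b" and "\<forall>x\<in>carrier G. (phi ^^ a) x = (phi ^^ b) x"
  shows "\<forall>x\<in>carrier G. (phi ^^ (b - a)) x = x"
proof
  fix x assume x: "x \<in> carrier G"
  have "(phi ^^ a) ((phi ^^ (b - a)) x) = (phi ^^ b) x"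
    using assms(1) by (metis funpow_add le_add_diff_inverse o_apply)
  also have "\<dots> = (phi ^^ a) x" using assms(2) x by simp
  finally show "(phi ^^ (b - a)) x = x" using inj_on_funpow x by (meson inj_on_def funpow_closed)
qed

text \<open>By the pigeonhole principle two powers of \<open>\<phi>\<close> agree on the finite carrier.\<close>
lemma perm_order_exists: "\<exists>m. 0 < m \<and> (\<forall>x\<in>carrier G. (phi ^^ m) x = x)"
proof -
  define f where "f = (\<lambda>k. restrict (phi ^^ k) (carrier G))"
  have "range f \<subseteq> carrier G \<rightarrow>\<^sub>E carrier G" unfolding f_def by auto
  then have "finite (range f)" using finite_carrier by (meson finite_PiE finite_subset)
  then have "\<not> inj f" using finite_imageD by blast
  then obtain i j where ij: "f i = f j" "i < j" unfolding inj_def by (metis linorder_neqE_nat)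
  then have "\<forall>x\<in>carrier G. (phi ^^ i) x = (phi ^^ j) x" unfolding f_def by (metis restrict_apply')
  then show ?thesis using funpow_diff_id ij(2) by (intro exI[of _ "j - i"]) auto
qed

lemma perm_order_pos: "0 < n" and funpow_perm_order: "x \<in> carrier G \<Longrightarrow> (phi ^^ n) x = x"
  using LeastI_ex[OF perm_order_exists] unfolding perm_order_def by auto

lemma funpow_less_perm_order_not_id: "0 < m \<Longrightarrow> m < n \<Longrightarrow> \<exists>x\<in>carrier G. (phi ^^ m) x \<noteq> x"
  using not_less_Least[of m "\<lambda>m. 0 < m \<and> (\<forall>x\<in>carrier G. (phi ^^ m) x = x)"]
  unfolding perm_order_def by blast

lemma funpow_mod_perm_order: "x \<in> carrier G \<Longrightarrow> (phi ^^ a) x = (phi ^^ (a mod n)) x"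
proof (induction a rule: less_induct)
  case (less a)
  show ?case
  proof (cases "a < n")
    case False
    then have "(phi ^^ a) x = (phi ^^ (a - n)) ((phi ^^ n) x)"
      by (metis funpow_add le_add_diff_inverse2 not_less o_apply)
    then show ?thesis using less perm_order_pos funpow_perm_order False
      by (simp add: le_mod_geq)
  qed simp
qed

lemma funpow_eq_on_carrier_iff:
  "(\<forall>x\<in>carrier G. (phi ^^ a) x = (phi ^^ b) x) \<longleftrightarrow> a mod n = b mod n"
proof
  assume "\<forall>x\<in>carrier G. (phi ^^ a) x = (phi ^^ b) x"
  then have eq: "\<forall>x\<in>carrier G. (phi ^^ (a mod n)) x = (phi ^^ (b mod n)) x"
    using funpow_mod_perm_order by metis
  have less: "c < n" if "c = a mod n \<or> c = b mod n" for c
    using that perm_order_pos by auto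
  have "\<not> (\<forall>x\<in>carrier G. (phi ^^ c) x = (phi ^^ d) x)"
    if "c < d" "d < n" for c d
  proof
    assume "\<forall>x\<in>carrier G. (phi ^^ c) x = (phi ^^ d) x"
    then have "\<forall>x\<in>carrier G. (phi ^^ (d - c)) x = x" using funpow_diff_id that(1) by simp
    moreover have "0 < d - c" "d - c < n" using that by auto
    ultimately show False using funpow_less_perm_order_not_id by blast
  qed
  then show "a mod n = b mod n" using eq less by (metis linorder_neqE_nat)
next
  assume "a mod n = b mod n"
  then show "\<forall>x\<in>carrier G. (phi ^^ a) x = (phi ^^ b) x" using funpow_mod_perm_order by metis
qed

end

locale finite_skew_morphism = group G + finite_carrier_perm G phi
  for G (structure) and phi +
  fixes pw
  assumes skew_morphism: "skew_morphism G phi pw"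
begin

abbreviation Ker where "Ker \<equiv> skew_kernel G phi pw"
abbreviation Core where "Core \<equiv> skew_core G phi pw"
abbreviation Smooth where "Smooth \<equiv> skew_smooth G phi pw"

lemma phi_one [simp]: "phi \<one> = \<one>"
  using skew_morphism by (simp add: skew_morphism_def)

lemma funpow_one [simp]: "(phi ^^ k) \<one> = \<one>"
  by (induct k) auto

lemma phi_mult: "x \<in> carrier G \<Longrightarrow> y \<in> carrier G \<Longrightarrow> phi (x \<otimes> y) = phi x \<otimes> (phi ^^ pw x) y"
  using skew_morphism by (simp add: skew_morphism_def)

lemma kernel_iff: "x \<in> Ker \<longleftrightarrow> x \<in> carrier G \<and> (\<forall>y\<in>carrier G. phi (x \<otimes> y) = phi x \<otimes> phi y)"
proof -
  have "(\<forall>y\<in>carrier G. phi (x \<otimes> y) = phi x \<otimes> phi y) \<longleftrightarrow>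
          (\<forall>y\<in>carrier G. (phi ^^ pw x) y = (phi ^^ 1) y)" if "x \<in> carrier G"
    using that by (auto simp: phi_mult)
  then show ?thesis unfolding skew_kernel_def using funpow_eq_on_carrier_iff by blast
qed

text \<open>For \<open>n = 1\<close> every element lies in the kernel although \<open>pw x = 0\<close>.\<close>
lemma kernel_pw_eq_1: "1 < n \<Longrightarrow> x \<in> Ker \<Longrightarrow> pw x = 1"
  using skew_morphism unfolding skew_kernel_def skew_morphism_def by auto

lemma one_in_kernel: "\<one> \<in> Ker"
  by (auto simp: kernel_iff)

lemma kernel_mult_closed: "x \<in> Ker \<Longrightarrow> y \<in> Ker \<Longrightarrow> x \<otimes> y \<in> Ker"
  by (auto simp: kernel_iff m_assoc)

lemma kernel_subset: "Ker \<subseteq> carrier G"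
  by (auto simp: skew_kernel_def)

lemma core_eq: "Core = {x \<in> carrier G. \<forall>j. (phi ^^ j) x \<in> Ker}"
proof (intro equalityI subsetI)
  fix x assume x: "x \<in> Core"
  have "x \<in> (phi ^^ n) ` Ker" using x perm_order_pos unfolding skew_core_def by auto
  then have xc: "x \<in> carrier G" using kernel_subset by auto
  have "(phi ^^ j) x \<in> Ker" for j
  proof -
    define i where "i = n - j mod n"
    have "i \<in> {1..n}" using perm_order_pos unfolding i_def by (simp add: Suc_leI)
    then obtain k where k: "k \<in> Ker" "x = (phi ^^ i) k" using x unfolding skew_core_def by blast
    have "(j + i) mod n = 0"
      using mod_less_divisor[OF perm_order_pos, of j] unfolding i_def
      by (metis add_diff_inverse_nat less_imp_le_nat mod_add_left_eq mod_self not_less)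
    then have "(phi ^^ (j + i)) k = k"
      using funpow_mod_perm_order k(1) kernel_subset by (metis funpow_0 id_apply subsetD)
    then show ?thesis using k by (simp add: funpow_add)
  qed
  then show "x \<in> {x \<in> carrier G. \<forall>j. (phi ^^ j) x \<in> Ker}" using xc by auto
next
  fix x assume x: "x \<in> {x \<in> carrier G. \<forall>j. (phi ^^ j) x \<in> Ker}"
  have "x \<in> (phi ^^ i) ` Ker" if i: "i \<in> {1..n}" for i
  proof
    show "(phi ^^ (n - i)) x \<in> Ker" using x by auto
    have "(phi ^^ i) ((phi ^^ (n - i)) x) = (phi ^^ n) x" using i
      by (metis atLeastAtMost_iff funpow_add le_add_diff_inverse o_apply)
    then show "x = (phi ^^ i) ((phi ^^ (n - i)) x)" using funpow_perm_order x by auto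
  qed
  then show "x \<in> Core" unfolding skew_core_def by auto
qed

lemma core_subset: "Core \<subseteq> carrier G"
  using core_eq by auto

lemma core_subset_kernel: "Core \<subseteq> Ker"
  using core_eq by (auto dest: spec[of _ 0])

lemma funpow_core_closed: "x \<in> Core \<Longrightarrow> (phi ^^ k) x \<in> Core"
proof -
  assume x: "x \<in> Core"
  have "(phi ^^ j) ((phi ^^ k) x) = (phi ^^ (j + k)) x" for j by (simp add: funpow_add)
  then show ?thesis using x core_eq by auto
qed

definition pw_sum where "pw_sum x k = (\<Sum>i<k. pw ((phi ^^ i) x))"

lemma funpow_mult:
  "x \<in> carrier G \<Longrightarrow> y \<in> carrier G \<Longrightarrow> (phi ^^ k) (x \<otimes> y) = (phi ^^ k) x \<otimes> (phi ^^ pw_sum x k) y"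
proof (induction k)
  case 0
  then show ?case by (simp add: pw_sum_def)
next
  case (Suc k)
  have "(phi ^^ Suc k) (x \<otimes> y) = phi ((phi ^^ k) x \<otimes> (phi ^^ pw_sum x k) y)"
    using Suc by simp
  also have "\<dots> = (phi ^^ Suc k) x \<otimes> (phi ^^ pw ((phi ^^ k) x)) ((phi ^^ pw_sum x k) y)"
    using Suc by (simp add: phi_mult)
  also have "\<dots> = (phi ^^ Suc k) x \<otimes> (phi ^^ pw_sum x (Suc k)) y"
    by (simp add: pw_sum_def funpow_add add.commute)
  finally show ?case .
qed

lemma pw_mult_mod:
  assumes "x \<in> carrier G" "y \<in> carrier G"
  shows "pw (x \<otimes> y) mod n = pw_sum y (pw x) mod n"
proof -
  have "(phi ^^ pw (x \<otimes> y)) z = (phi ^^ pw_sum y (pw x)) z" if z: "z \<in> carrier G" for z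
  proof -
    have "phi (x \<otimes> y) \<otimes> (phi ^^ pw (x \<otimes> y)) z = phi (x \<otimes> y \<otimes> z)"
      using assms z by (simp add: phi_mult)
    also have "\<dots> = phi (x \<otimes> (y \<otimes> z))"
      using assms z by (simp add: m_assoc)
    also have "\<dots> = phi (x \<otimes> y) \<otimes> (phi ^^ pw_sum y (pw x)) z"
      using assms z by (simp add: phi_mult funpow_mult m_assoc)
    finally show ?thesis using assms z by simp
  qed
  then show ?thesis using funpow_eq_on_carrier_iff by blast
qed

lemma pw_sum_core_mod: "x \<in> Core \<Longrightarrow> pw_sum x k mod n = k mod n"
proof -
  assume x: "x \<in> Core"
  have "pw_sum x k mod n = (\<Sum>i<k. 1) mod n" unfolding pw_sum_def
    by (rule sum_mod_cong) (use x core_eq in \<open>auto simp: skew_kernel_def\<close>)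
  then show ?thesis by simp
qed

lemma funpow_core_mult:
  "x \<in> Core \<Longrightarrow> y \<in> carrier G \<Longrightarrow> (phi ^^ k) (x \<otimes> y) = (phi ^^ k) x \<otimes> (phi ^^ k) y"
  using funpow_mult[of x y k] core_subset pw_sum_core_mod[of x k] funpow_mod_perm_order[of y]
  by (metis subsetD)

lemma core_subgroup: "subgroup Core G"
proof (rule finite_closed_subgroup)
  show "finite Core" using core_subset finite_carrier finite_subset by blast
  show "Core \<subseteq> carrier G" by (rule core_subset)
  show "\<one> \<in> Core" using core_eq one_in_kernel by simp
  fix x y assume xy: "x \<in> Core" "y \<in> Core"
  then have "y \<in> carrier G" using core_subset by blast
  then have "(phi ^^ j) (x \<otimes> y) \<in> Ker" for j
    using funpow_core_mult[OF xy(1)] xy core_eq kernel_mult_closed by auto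
  then show "x \<otimes> y \<in> Core" using core_eq xy \<open>y \<in> carrier G\<close> core_subset by auto
qed

text \<open>Expanding \<open>\<pi>(g (x g\<inverse>))\<close> by \<open>pw_mult_mod\<close>, every factor \<open>\<phi>\<^sup>i(x) \<in> Ker\<close> has power 1 and
  drops out, so \<open>\<pi>(g x g\<inverse>) \<equiv> \<pi>(g g\<inverse>) = \<pi>(1)\<close>.\<close>
lemma conj_core_in_kernel:
  assumes g: "g \<in> carrier G" and x: "x \<in> Core"
  shows "g \<otimes> x \<otimes> inv g \<in> Ker"
proof (cases "n = 1")
  case True
  then show ?thesis using g x core_subset by (auto simp: skew_kernel_def)
next
  case False
  then have n1: "1 < n" using perm_order_pos by linarith
  have xc: "x \<in> carrier G" using x core_subset by auto
  have ig: "inv g \<in> carrier G" using g by simp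
  have "pw (g \<otimes> (x \<otimes> inv g)) mod n = pw_sum (x \<otimes> inv g) (pw g) mod n"
    using pw_mult_mod g xc ig by simp
  also have "\<dots> = pw_sum (inv g) (pw g) mod n"
    unfolding pw_sum_def
  proof (rule sum_mod_cong)
    fix i
    have "(phi ^^ i) x \<in> Ker" using x core_eq by auto
    then have "pw ((phi ^^ i) x \<otimes> (phi ^^ i) (inv g)) mod n = pw ((phi ^^ i) (inv g)) mod n"
      using pw_mult_mod xc ig kernel_pw_eq_1[OF n1] by (simp add: pw_sum_def)
    then show "pw ((phi ^^ i) (x \<otimes> inv g)) mod n = pw ((phi ^^ i) (inv g)) mod n"
      using funpow_core_mult x ig by simp
  qed
  also have "\<dots> = pw (g \<otimes> inv g) mod n" by (rule pw_mult_mod[OF g ig, symmetric])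
  also have "\<dots> = 1 mod n" using one_in_kernel g by (simp add: skew_kernel_def)
  finally show ?thesis using g xc by (simp add: skew_kernel_def m_assoc)
qed

lemma funpow_conj_core:
  assumes g: "g \<in> carrier G" and x: "x \<in> Core"
  shows "(phi ^^ j) (g \<otimes> x \<otimes> inv g) = (phi ^^ j) g \<otimes> (phi ^^ pw_sum g j) x \<otimes> inv ((phi ^^ j) g)"
proof -
  have xc: "x \<in> carrier G" using x core_subset by auto
  have ig: "inv g \<in> carrier G" using g by simp
  have "\<one> = (phi ^^ j) g \<otimes> (phi ^^ pw_sum g j) (inv g)"
    using funpow_mult[OF g ig, of j] g by simp
  then have inv: "inv ((phi ^^ j) g) = (phi ^^ pw_sum g j) (inv g)"
    using g ig by (metis inv_equality inv_comm funpow_closed)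
  have "(phi ^^ j) (g \<otimes> x \<otimes> inv g) = (phi ^^ j) g \<otimes> (phi ^^ pw_sum g j) (x \<otimes> inv g)"
    using funpow_mult[OF g m_closed[OF xc ig], of j] g xc ig by (simp add: m_assoc)
  also have "\<dots> = (phi ^^ j) g \<otimes> ((phi ^^ pw_sum g j) x \<otimes> (phi ^^ pw_sum g j) (inv g))"
    using funpow_core_mult[OF x ig] by simp
  finally show ?thesis using inv g xc ig by (simp add: m_assoc)
qed

lemma core_normal: "Core \<lhd> G"
proof -
  have "g \<otimes> x \<otimes> inv g \<in> Core" if g: "g \<in> carrier G" and x: "x \<in> Core" for g x
  proof -
    have "(phi ^^ j) (g \<otimes> x \<otimes> inv g) \<in> Ker" for j
      using funpow_conj_core[OF g x, of j] conj_core_in_kernel[of "(phi ^^ j) g"] g x funpow_core_closed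
      by simp
    then show ?thesis using core_eq g x core_subset by auto
  qed
  then show ?thesis using normal_inv_iff core_subgroup by blast
qed

lemma rcos_phi_eq:
  assumes x: "x \<in> carrier G" and y: "y \<in> Core #> x"
  shows "Core #> phi y = Core #> phi x"
proof -
  obtain k where k: "k \<in> Core" "y = k \<otimes> x" using y unfolding r_coset_def by auto
  then have "phi y = phi k \<otimes> phi x" using x core_subset_kernel kernel_iff by blast
  moreover have "phi k \<in> Core" using funpow_core_closed[OF k(1), of 1] by simp
  ultimately have "phi y \<in> Core #> phi x" using x core_subset by (simp add: rcosI)
  then show ?thesis using repr_independence core_subgroup x by (metis phi_closed)
qed

lemma smooth_iff: "x \<in> Smooth \<longleftrightarrow> x \<in> carrier G \<and> Core #> phi x = Core #> x"
proof -
  interpret normal Core G by (rule core_normal)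
  have "phi x \<in> Core #> x \<longleftrightarrow> Core #> phi x = Core #> x" if "x \<in> carrier G"
    using that repr_independence repr_independenceD subgroup_axioms by (metis phi_closed)
  then show ?thesis unfolding skew_smooth_def using coset_eq by auto
qed

lemma smooth_subset: "Smooth \<subseteq> carrier G"
  using smooth_iff by auto

lemma phi_smooth_closed: "x \<in> Smooth \<Longrightarrow> phi x \<in> Smooth"
proof -
  assume x: "x \<in> Smooth"
  then have xc: "x \<in> carrier G" and eq: "Core #> phi x = Core #> x" using smooth_iff by auto
  have "phi x \<in> Core #> x" by (rule repr_independenceD[OF core_subgroup phi_closed[OF xc] eq[symmetric]])
  then have "Core #> phi (phi x) = Core #> phi x" by (rule rcos_phi_eq[OF xc])
  then show ?thesis using smooth_iff xc by simp
qed

lemma funpow_smooth_closed: "x \<in> Smooth \<Longrightarrow> (phi ^^ k) x \<in> Smooth"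
  by (induction k) (simp_all add: phi_smooth_closed)

lemma image_smooth: "phi ` Smooth = Smooth"
  using image_phi_eq smooth_subset phi_smooth_closed by blast

lemma rcos_funpow_smooth: "x \<in> Smooth \<Longrightarrow> Core #> (phi ^^ k) x = Core #> x"
proof (induction k)
  case (Suc k)
  have "(phi ^^ k) x \<in> Smooth" using Suc.prems by (rule funpow_smooth_closed)
  then have "Core #> phi ((phi ^^ k) x) = Core #> (phi ^^ k) x" using smooth_iff by blast
  then show ?case using Suc by simp
qed simp

lemma smooth_subgroup: "subgroup Smooth G"
proof (rule finite_closed_subgroup)
  interpret normal Core G by (rule core_normal)
  show "finite Smooth" using smooth_subset finite_carrier finite_subset by blast
  show "Smooth \<subseteq> carrier G" by (rule smooth_subset)
  show "\<one> \<in> Smooth" using smooth_iff by simp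
  fix x y assume x: "x \<in> Smooth" and y: "y \<in> Smooth"
  then have xc: "x \<in> carrier G" and yc: "y \<in> carrier G" using smooth_subset by auto
  have "Core #> phi (x \<otimes> y) = Core #> (phi x \<otimes> (phi ^^ pw x) y)"
    using xc yc by (simp add: phi_mult)
  also have "\<dots> = (Core #> phi x) <#> (Core #> (phi ^^ pw x) y)"
    using xc yc by (simp add: rcos_sum)
  also have "\<dots> = (Core #> x) <#> (Core #> y)"
    using rcos_funpow_smooth[OF y] x smooth_iff by simp
  also have "\<dots> = Core #> (x \<otimes> y)"
    using xc yc by (simp add: rcos_sum)
  finally show "x \<otimes> y \<in> Smooth" using smooth_iff xc yc by simp
qed

lemma induced_skew_rcos:
  assumes "x \<in> carrier G"
  shows "induced_skew G Core phi (Core #> x) = Core #> phi x"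
proof -
  have "x \<in> Core #> x" using assms core_subgroup by (rule rcos_self)
  then have "(SOME y. y \<in> Core #> x) \<in> Core #> x" by (rule someI)
  then show ?thesis unfolding induced_skew_def using rcos_phi_eq assms by simp
qed

lemma fixset_induced_skew:
  "fixset (carrier (G Mod Core)) (induced_skew G Core phi) = (\<lambda>x. Core #> x) ` Smooth"
proof -
  have "Core #> x \<in> fixset (carrier (G Mod Core)) (induced_skew G Core phi) \<longleftrightarrow> x \<in> Smooth"
    if "x \<in> carrier G" for x
    using that induced_skew_rcos smooth_iff by (auto simp: fixset_def carrier_FactGroup)
  moreover have "fixset (carrier (G Mod Core)) (induced_skew G Core phi) \<subseteq> (\<lambda>x. Core #> x) ` carrier G"
    by (auto simp: fixset_def carrier_FactGroup)
  ultimately show ?thesis using smooth_subset by blast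
qed

lemma core_subset_smooth: "Core \<subseteq> Smooth"
proof
  fix k assume k: "k \<in> Core"
  then have "phi k \<in> Core" using funpow_core_closed[of k 1] by simp
  then have "Core #> phi k = Core" "Core #> k = Core"
    using k core_subgroup subgroup.rcos_const[OF _ is_group] by blast+
  then show "k \<in> Smooth" using smooth_iff k core_subset by auto
qed

lemma smooth_eq_fixset_if_core_trivial: "Core = {\<one>} \<Longrightarrow> Smooth = fixset (carrier G) phi"
  unfolding skew_smooth_def fixset_def by (auto simp: l_coset_def)

end

theorem mainTheorem5:
  fixes G (structure) and phi :: "'a \<Rightarrow> 'a" and pw :: "'a \<Rightarrow> nat"
  assumes "group G" and "finite (carrier G)" and "skew_morphism G phi pw"
  defines "K \<equiv> skew_core G phi pw"
      and "S \<equiv> skew_smooth G phi pw"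
      and "F \<equiv> fixset (carrier (G Mod skew_core G phi pw)) (induced_skew G (skew_core G phi pw) phi)"
  shows "subgroup S G \<and> phi ` S = S
         \<and> F = (\<lambda>x. K #> x) ` S
         \<and> (S = K \<longleftrightarrow> F = {\<one>\<^bsub>G Mod K\<^esub>})
         \<and> (S = carrier G \<longleftrightarrow> F = carrier (G Mod K))
         \<and> (K = {\<one>} \<longrightarrow> S = fixset (carrier G) phi)"
proof -
  have "bij_betw phi (carrier G) (carrier G)" using assms(3) by (simp add: skew_morphism_def)
  then interpret finite_skew_morphism G phi pw
    using assms(1-3)
    by (simp add: finite_skew_morphism_def finite_carrier_perm_def finite_skew_morphism_axioms_def)
  have F: "F = (\<lambda>x. K #> x) ` S"
    unfolding F_def K_def S_def by (rule fixset_induced_skew)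
  have "S = K \<longleftrightarrow> F = {\<one>\<^bsub>G Mod K\<^esub>}"
    unfolding F K_def S_def
    by (simp add: rcosets_eq_singleton_iff core_subgroup core_subset_smooth smooth_subset)
  moreover have "S = carrier G \<longleftrightarrow> F = carrier (G Mod K)"
    unfolding F K_def S_def carrier_FactGroup
    by (simp add: rcosets_eq_carrier_iff smooth_subgroup core_subgroup core_subset_smooth)
  ultimately show ?thesis
    using smooth_subgroup image_smooth F smooth_eq_fixset_if_core_trivial
    unfolding K_def S_def by blast
qed

end
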